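(* Fix an integer $L\ge 1$ and a real $r\in[0,\frac{L}{L+1})$. There exist an integer $N=N(r,L)$ and a function $g:\mathbb{N}\to[0,\infty)$ with $g(n)\to0$ as $n\to\infty$ such that for every integer $q\ge \max\{2,L\}$ and every $n\ge N$ with $rn\in\mathbb{N}$, every $(r,L)$ list-decodable code $C\subseteq[q]^n$ has $$|C|\le (1+g(n))\,q^{\,n-\lfloor\frac{L+1}{L}rn\rfloor}.$$
   Context: $[q]=\{1,\dots,q\}$. A code is a subset $C\subseteq[q]^n$. The Hamming distance $d(x,y)$ is the number of coordinates where $x,y$ differ, and $B_t(v)$ is the Hamming ball of radius $t$ around $v$ in $[q]^n$. A code $C$ is $(r,L)$ list-decodable if $|B_{rn}(v)\cap C|\le L$ for all $v\in[q]^n$. *)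

theory Defs
  imports Complex_Main "HOL-Library.FuncSet"
begin

text \<open>Words of length n over the alphabet [q] = {1..q}, as extensional functions on the
  coordinate set {0..<n}.\<close>
definition words :: "nat \<Rightarrow> nat \<Rightarrow> (nat \<Rightarrow> nat) set" where
  "words q n = PiE {..<n} (\<lambda>_. {1..q})"

definition hamming_dist :: "nat \<Rightarrow> (nat \<Rightarrow> nat) \<Rightarrow> (nat \<Rightarrow> nat) \<Rightarrow> nat" where
  "hamming_dist n x y = card {i \<in> {..<n}. x i \<noteq> y i}"

definition hamming_ball :: "nat \<Rightarrow> nat \<Rightarrow> real \<Rightarrow> (nat \<Rightarrow> nat) \<Rightarrow> (nat \<Rightarrow> nat) set" where
  "hamming_ball q n t v = {x \<in> words q n. real (hamming_dist n x v) \<le> t}"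

definition list_decodable :: "nat \<Rightarrow> nat \<Rightarrow> real \<Rightarrow> nat \<Rightarrow> (nat \<Rightarrow> nat) set \<Rightarrow> bool" where
  "list_decodable q n r L C \<longleftrightarrow>
     (\<forall>v \<in> words q n. card (hamming_ball q n (r * real n) v \<inter> C) \<le> L)"

end

theory Submission
  imports Defs "HOL-Library.Disjoint_Sets"
begin

text \<open>
  Put t = r n, s = \<lfloor>(L + 1) t / L\<rfloor> and k = n - s. Everything rests on one observation: if
  L + 1 codewords can be given disjoint shares of the coordinates so that each of them lies within
  distance t of the word that copies every codeword on its share and a fixed word elsewhere,
  list decodability is violated.

  This first gives the Singleton-type bound card C \<le> L q^(n - s). Next, projecting C onto each
  k-set of coordinates and averaging gives card C \<le> q^k plus the sum over pairs x \<noteq> y of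
  ((n - d(x, y)) choose k) / (n choose k). By the observation, a (k + 1)-set of coordinates
  meets the disagreement set of x and y in at most one point for fewer than L codewords y; hence
  the pairs at distance more than \<delta> contribute at most
  (L - 1) (n - k) / ((k + 1) (\<delta> + 1)) card C, which is O(card C / n) for \<delta> proportional to n.

  The pairs at distance at most \<delta> only involve codewords with a close neighbour. There are at
  most L times as many of those as points in a maximal 2 \<delta>-separated set of them, and that set
  is list decodable with radius t - \<delta> and list size L div 2; by the Singleton-type bound it has
  O(q^(n - s')) points, and for \<delta> = t / (4 L) the gain s' - s grows linearly in n.
\<close>

section \<open>Hamming distance and list decoding\<close>

definition disagreement :: "nat \<Rightarrow> (nat \<Rightarrow> nat) \<Rightarrow> (nat \<Rightarrow> nat) \<Rightarrow> nat set" where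
  "disagreement n x y = {i \<in> {..<n}. x i \<noteq> y i}"

lemma hamming_dist_eq_card_disagreement: "hamming_dist n x y = card (disagreement n x y)"
  by (simp add: hamming_dist_def disagreement_def)

lemma disagreement_subset: "disagreement n x y \<subseteq> {..<n}"
  by (auto simp: disagreement_def)

lemma finite_disagreement [simp]: "finite (disagreement n x y)"
  by (simp add: disagreement_def)

lemma hamming_dist_commute: "hamming_dist n x y = hamming_dist n y x"
  unfolding hamming_dist_def by (simp add: eq_commute)

lemma hamming_dist_self [simp]: "hamming_dist n x x = 0"
  by (simp add: hamming_dist_def)

lemma hamming_dist_triangle: "hamming_dist n x z \<le> hamming_dist n x y + hamming_dist n y z"
proof -
  have "disagreement n x z \<subseteq> disagreement n x y \<union> disagreement n y z"
    by (auto simp: disagreement_def)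
  then have "card (disagreement n x z) \<le> card (disagreement n x y \<union> disagreement n y z)"
    by (intro card_mono) (auto simp: disagreement_def)
  also have "\<dots> \<le> card (disagreement n x y) + card (disagreement n y z)"
    by (rule card_Un_le)
  finally show ?thesis
    by (simp add: hamming_dist_eq_card_disagreement)
qed

lemma finite_words: "finite (words q n)"
  unfolding words_def by (intro finite_PiE) auto

lemma card_words: "card (words q n) = q ^ n"
  unfolding words_def by (simp add: card_PiE)

lemma finite_subset_words: "C \<subseteq> words q n \<Longrightarrow> finite C"
  using finite_subset finite_words by blast

lemma words_range: "c \<in> words q n \<Longrightarrow> j < n \<Longrightarrow> c j \<in> {1..q}"
  by (auto simp: words_def PiE_iff)

definition list_decodable_radius :: "nat \<Rightarrow> nat \<Rightarrow> nat \<Rightarrow> nat \<Rightarrow> (nat \<Rightarrow> nat) set \<Rightarrow> bool" where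
  "list_decodable_radius q n t L C \<longleftrightarrow>
     (\<forall>v \<in> words q n. card {c \<in> C. hamming_dist n c v \<le> t} \<le> L)"

lemma list_decodable_iff_radius:
  assumes "C \<subseteq> words q n" and "r * real n = real t"
  shows "list_decodable q n r L C \<longleftrightarrow> list_decodable_radius q n t L C"
proof -
  have "hamming_ball q n (r * real n) v \<inter> C = {c \<in> C. hamming_dist n c v \<le> t}" for v
    using assms unfolding hamming_ball_def by auto
  then show ?thesis
    unfolding list_decodable_def list_decodable_radius_def by simp
qed

lemma list_decodable_radius_card_le:
  assumes "list_decodable_radius q n t L C" and "finite C" and "v \<in> words q n"
    and "S \<subseteq> C" and "\<And>c. c \<in> S \<Longrightarrow> hamming_dist n c v \<le> t"
  shows "card S \<le> L"
proof -
  have "card S \<le> card {c \<in> C. hamming_dist n c v \<le> t}"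
    using assms(2,4,5) by (intro card_mono) auto
  also have "\<dots> \<le> L"
    using assms(1,3) unfolding list_decodable_radius_def by blast
  finally show ?thesis .
qed

section \<open>Common centres and the Singleton-type bound\<close>

lemma exists_disjoint_family_with_card:
  assumes "finite S" and "finite R" and "(\<Sum>c\<in>S. a c) \<le> card R"
  shows "\<exists>P. (\<forall>c\<in>S. P c \<subseteq> R \<and> card (P c) = a c) \<and> disjoint_family_on P S"
  using assms
proof (induction S arbitrary: R rule: finite_induct)
  case empty
  show ?case
    by (simp add: disjoint_family_on_def)
next
  case (insert c S)
  then have "a c \<le> card R" by simp
  then obtain T where T: "T \<subseteq> R" "card T = a c"
    by (rule obtain_subset_with_card_n)
  have "(\<Sum>c\<in>S. a c) \<le> card (R - T)"
    using insert T by (simp add: card_Diff_subset finite_subset)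
  then obtain P where P: "\<forall>c\<in>S. P c \<subseteq> R - T \<and> card (P c) = a c" "disjoint_family_on P S"
    using insert by (meson finite_Diff)
  have "disjoint_family_on (P(c := T)) S"
    using P(2) insert.hyps(2) by (auto simp: disjoint_family_on_def)
  then have "disjoint_family_on (P(c := T)) (insert c S)"
    using P(1) insert.hyps(2) by (subst disjoint_family_on_insert) auto
  moreover have "\<forall>d\<in>insert c S. (P(c := T)) d \<subseteq> R \<and> card ((P(c := T)) d) = a d"
    using P(1) T insert.hyps(2) by auto
  ultimately show ?case
    by blast
qed

text \<open>Each word c of S is granted a private set of a c coordinates of R on which the centre
  copies c; everywhere else the centre copies x.\<close>
lemma exists_center:
  assumes S: "finite S" "S \<subseteq> words q n" and x: "x \<in> words q n" and R: "R \<subseteq> {..<n}"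
    and budget: "(\<Sum>c\<in>S. a c) \<le> card R"
  obtains v where "v \<in> words q n"
    and "\<And>c. c \<in> S \<Longrightarrow> hamming_dist n c v \<le> card {j \<in> {..<n} - R. c j \<noteq> x j} + (card R - a c)"
proof -
  have fR: "finite R"
    using R finite_subset by blast
  obtain P where P: "\<forall>c\<in>S. P c \<subseteq> R \<and> card (P c) = a c" and disj: "disjoint_family_on P S"
    using exists_disjoint_family_with_card[OF S(1) fR budget] by blast
  define owner where "owner j = (SOME c. c \<in> S \<and> j \<in> P c)" for j
  have owner: "owner j = c" if "c \<in> S" "j \<in> P c" for c j
    unfolding owner_def
    using that disj by (intro some_equality) (auto simp: disjoint_family_on_def)
  define v where "v = (\<lambda>j. if j < n then if j \<in> (\<Union>c\<in>S. P c) then owner j j else x j else undefined)"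
  have "v j \<in> {1..q}" if "j < n" for j
  proof (cases "j \<in> (\<Union>c\<in>S. P c)")
    case True
    then obtain c where "c \<in> S" "j \<in> P c"
      by blast
    then show ?thesis
      using S(2) that owner words_range by (auto simp: v_def)
  next
    case False
    then show ?thesis
      using x that words_range by (simp add: v_def)
  qed
  then have "v \<in> words q n"
    by (auto simp: v_def words_def PiE_iff extensional_def)
  moreover have "hamming_dist n c v \<le> card {j \<in> {..<n} - R. c j \<noteq> x j} + (card R - a c)"
    if c: "c \<in> S" for c
  proof -
    have "disagreement n c v \<subseteq> {j \<in> {..<n} - R. c j \<noteq> x j} \<union> (R - P c)"
      using P c owner by (auto simp: disagreement_def v_def)
    then have "card (disagreement n c v) \<le> card ({j \<in> {..<n} - R. c j \<noteq> x j} \<union> (R - P c))"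
      using fR by (intro card_mono) auto
    also have "\<dots> \<le> card {j \<in> {..<n} - R. c j \<noteq> x j} + card (R - P c)"
      by (rule card_Un_le)
    also have "card (R - P c) = card R - a c"
      using P c fR by (metis card_Diff_subset finite_subset)
    finally show ?thesis
      by (simp add: hamming_dist_eq_card_disagreement)
  qed
  ultimately show ?thesis
    using that by blast
qed

lemma card_le_of_coordinate_budget:
  assumes C: "C \<subseteq> words q n" and dec: "list_decodable_radius q n t L C"
    and S: "S \<subseteq> C" and x: "x \<in> words q n" and R: "R \<subseteq> {..<n}"
    and budget: "(\<Sum>c\<in>S. a c) \<le> card R"
    and within: "\<And>c. c \<in> S \<Longrightarrow> card {j \<in> {..<n} - R. c j \<noteq> x j} + (card R - a c) \<le> t"
  shows "card S \<le> L"
proof -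
  have fC: "finite C"
    using C by (rule finite_subset_words)
  then have "finite S" "S \<subseteq> words q n"
    using S C finite_subset by auto
  then obtain v where v: "v \<in> words q n"
    and dist: "\<And>c. c \<in> S \<Longrightarrow> hamming_dist n c v \<le> card {j \<in> {..<n} - R. c j \<noteq> x j} + (card R - a c)"
    using exists_center[OF _ _ x R budget] by blast
  show ?thesis
    using list_decodable_radius_card_le[OF dec fC v S] dist within order_trans by blast
qed

lemma card_le_mult_card_image:
  assumes "finite A" and "\<And>b. b \<in> f ` A \<Longrightarrow> card {a \<in> A. f a = b} \<le> m"
  shows "card A \<le> m * card (f ` A)"
proof -
  have "card A = (\<Sum>b\<in>f ` A. card {a \<in> A. f a = b})"
    using sum.image_gen[OF assms(1), of "\<lambda>_. 1 :: nat" f] by simp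
  also have "\<dots> \<le> (\<Sum>b\<in>f ` A. m)"
    by (intro sum_mono assms(2))
  finally show ?thesis
    by (simp add: mult.commute)
qed

lemma Suc_mult_diff_le:
  fixes L s t :: nat
  assumes "L * s \<le> (L + 1) * t"
  shows "(L + 1) * (s - t) \<le> s" and "(s - 1 - t) + L * (s - t) \<le> s - 1"
proof -
  show "(L + 1) * (s - t) \<le> s"
    using assms by (cases "t \<le> s") (auto simp: algebra_simps diff_mult_distrib2)
  show "(s - 1 - t) + L * (s - t) \<le> s - 1"
  proof (cases "t < s")
    case True
    then obtain m where s: "s = t + m" "0 < m"
      using less_imp_add_positive by blast
    then have "L * m \<le> t"
      using assms by (simp add: algebra_simps)
    then show ?thesis
      using s by simp
  qed simp
qed

lemma card_restrict_words_le:
  assumes "C \<subseteq> words q n" and "A \<subseteq> {..<n}"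
  shows "card ((\<lambda>c. restrict c A) ` C) \<le> q ^ card A"
proof -
  have "finite A"
    using assms(2) finite_subset by blast
  moreover have "c j \<in> {1..q}" if "c \<in> C" "j \<in> A" for c j
    using assms that words_range by blast
  then have "(\<lambda>c. restrict c A) ` C \<subseteq> PiE A (\<lambda>_. {1..q})"
    by (auto simp: PiE_iff)
  ultimately show ?thesis
    using card_mono[of "PiE A (\<lambda>_. {1..q})"] by (simp add: card_PiE finite_PiE)
qed

text \<open>Any L + 1 codewords agreeing outside the first s coordinates share a centre within
  distance t, by splitting the first s coordinates among them, s - t each.\<close>
theorem list_decodable_singleton_bound:
  assumes C: "C \<subseteq> words q n" and dec: "list_decodable_radius q n t L C"
    and s: "s \<le> n" "L * s \<le> (L + 1) * t"
  shows "card C \<le> L * q ^ (n - s)"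
proof -
  have fC: "finite C"
    using C by (rule finite_subset_words)
  define p where "p c = restrict c {s..<n}" for c :: "nat \<Rightarrow> nat"
  have fiber: "card F \<le> L" if F: "F \<subseteq> C" "\<And>c c'. c \<in> F \<Longrightarrow> c' \<in> F \<Longrightarrow> p c = p c'" for F
  proof (rule ccontr)
    assume "\<not> card F \<le> L"
    then have "L + 1 \<le> card F"
      by simp
    then obtain S where S: "S \<subseteq> F" "card S = L + 1" "finite S"
      by (rule obtain_subset_with_card_n)
    then obtain x where x: "x \<in> S"
      by fastforce
    have "(\<Sum>c\<in>S. s - t) \<le> card {..<s}"
      using S(2) Suc_mult_diff_le(1)[OF s(2)] by simp
    moreover have "card {j \<in> {..<n} - {..<s}. c j \<noteq> x j} + (card {..<s} - (s - t)) \<le> t"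
      if "c \<in> S" for c
    proof -
      have "p c = p x"
        using F S that x by blast
      then have "c j = x j" if "j \<in> {s..<n}" for j
        using that unfolding p_def by (metis restrict_apply')
      then have agree: "{j \<in> {..<n} - {..<s}. c j \<noteq> x j} = {}"
        by auto
      show ?thesis
        unfolding agree by simp
    qed
    moreover have "S \<subseteq> C" "x \<in> words q n" "{..<s} \<subseteq> {..<n}"
      using S F x C s(1) by auto
    ultimately have "card S \<le> L"
      using card_le_of_coordinate_budget[OF C dec] by blast
    with S(2) show False
      by simp
  qed
  then have "card C \<le> L * card (p ` C)"
    by (intro card_le_mult_card_image fC fiber) auto
  also have "card (p ` C) \<le> q ^ (n - s)"
    using card_restrict_words_le[OF C, of "{s..<n}"] unfolding p_def by (simp add: subset_iff)
  finally show ?thesis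
    by (simp add: mult_le_mono2)
qed

section \<open>Averaging over sets of coordinates\<close>

lemma sum_card_filter_swap:
  "finite A \<Longrightarrow> finite B \<Longrightarrow> (\<Sum>x\<in>A. card {y \<in> B. R x y}) = (\<Sum>y\<in>B. card {x \<in> A. R x y})"
  using sum.swap_restrict[of A B "\<lambda>_ _. 1 :: nat" R] by simp

lemma card_le_power_plus_collisions:
  assumes C: "C \<subseteq> words q n" and A: "A \<subseteq> {..<n}"
  shows "card C \<le> q ^ card A + card {x \<in> C. \<exists>y\<in>C. y \<noteq> x \<and> (\<forall>j\<in>A. x j = y j)}"
proof -
  define M where "M = {x \<in> C. \<exists>y\<in>C. y \<noteq> x \<and> (\<forall>j\<in>A. x j = y j)}"
  have "inj_on (\<lambda>c. restrict c A) (C - M)"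
  proof (rule inj_onI)
    fix x y
    assume xy: "x \<in> C - M" "y \<in> C - M" and eq: "restrict x A = restrict y A"
    have "x j = y j" if "j \<in> A" for j
      using fun_cong[OF eq, of j] that by simp
    with xy show "x = y"
      unfolding M_def by auto
  qed
  then have "card (C - M) = card ((\<lambda>c. restrict c A) ` (C - M))"
    by (simp add: card_image)
  also have "\<dots> \<le> q ^ card A"
    using C A by (intro card_restrict_words_le) auto
  finally have "card (C - M) \<le> q ^ card A" .
  moreover have "M \<subseteq> C" and "finite C"
    using C finite_subset_words unfolding M_def by auto
  ultimately show ?thesis
    unfolding M_def[symmetric] by (metis card_Diff_subset card_mono finite_subset le_diff_conv)
qed

lemma card_agreeing_subsets:
  "card {A. A \<subseteq> {..<n} \<and> card A = k \<and> (\<forall>j\<in>A. x j = y j)} = (n - hamming_dist n x y) choose k"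
proof -
  have "{A. A \<subseteq> {..<n} \<and> card A = k \<and> (\<forall>j\<in>A. x j = y j)}
      = {A. A \<subseteq> {..<n} - disagreement n x y \<and> card A = k}"
    by (auto simp: disagreement_def)
  moreover have "card ({..<n} - disagreement n x y) = n - hamming_dist n x y"
    using disagreement_subset[of n x y] by (simp add: card_Diff_subset hamming_dist_eq_card_disagreement)
  ultimately show ?thesis
    by (simp add: n_subsets)
qed

text \<open>Averaging card_le_power_plus_collisions over all k-sets of coordinates: a pair x, y of
  distinct codewords collides on exactly those k-sets on which x and y agree.\<close>
lemma choose_mult_card_le:
  assumes C: "C \<subseteq> words q n"
  shows "(n choose k) * card C
    \<le> (n choose k) * q ^ k + (\<Sum>x\<in>C. \<Sum>y\<in>C - {x}. (n - hamming_dist n x y) choose k)"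
proof -
  have fC: "finite C"
    using C by (rule finite_subset_words)
  define K where "K = {A. A \<subseteq> {..<n} \<and> card A = k}"
  have fK: "finite K"
    unfolding K_def by (rule finite_subset[of _ "Pow {..<n}"]) auto
  have cK: "card K = n choose k"
    unfolding K_def using n_subsets[of "{..<n}" k] by simp
  define agree where "agree A x y \<longleftrightarrow> (\<forall>j\<in>A. x j = y j)" for A and x y :: "nat \<Rightarrow> nat"
  define M where "M A = {x \<in> C. \<exists>y\<in>C. y \<noteq> x \<and> agree A x y}" for A
  have "(n choose k) * card C = (\<Sum>A\<in>K. card C)"
    using cK by simp
  also have "\<dots> \<le> (\<Sum>A\<in>K. q ^ k + card (M A))"
    using card_le_power_plus_collisions[OF C] unfolding K_def M_def agree_def
    by (intro sum_mono) fastforce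
  also have "\<dots> = (n choose k) * q ^ k + (\<Sum>A\<in>K. card {x \<in> C. x \<in> M A})"
    using cK by (simp add: sum.distrib M_def)
  also have "\<dots> = (n choose k) * q ^ k + (\<Sum>x\<in>C. card {A \<in> K. x \<in> M A})"
    using sum_card_filter_swap[OF fK fC] by simp
  also have "(\<Sum>x\<in>C. card {A \<in> K. x \<in> M A})
      \<le> (\<Sum>x\<in>C. \<Sum>y\<in>C - {x}. (n - hamming_dist n x y) choose k)"
  proof (rule sum_mono)
    fix x
    assume "x \<in> C"
    have "{A \<in> K. x \<in> M A} \<subseteq> (\<Union>y\<in>C - {x}. {A \<in> K. agree A x y})"
      unfolding M_def by auto
    then have "card {A \<in> K. x \<in> M A} \<le> card (\<Union>y\<in>C - {x}. {A \<in> K. agree A x y})"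
      using fK by (intro card_mono) (auto intro: finite_subset[OF _ fK])
    also have "\<dots> \<le> (\<Sum>y\<in>C - {x}. card {A \<in> K. agree A x y})"
      using fC by (intro card_UN_le) simp
    also have "\<dots> = (\<Sum>y\<in>C - {x}. (n - hamming_dist n x y) choose k)"
      using card_agreeing_subsets unfolding K_def agree_def by (simp add: conj_assoc)
    finally show "card {A \<in> K. x \<in> M A} \<le> (\<Sum>y\<in>C - {x}. (n - hamming_dist n x y) choose k)" .
  qed
  finally show ?thesis
    by simp
qed

text \<open>If L such y existed, then together with x they would be L + 1 codewords with a common
  centre within distance t: outside U, grant x s - 1 - t coordinates and each y s - t; on U the
  centre copies x, which costs each y at most one more coordinate.\<close>
lemma card_nearly_agreeing_on_less:
  assumes C: "C \<subseteq> words q n" and dec: "list_decodable_radius q n t L C" and x: "x \<in> C"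
    and U: "U \<subseteq> {..<n}" "card U + s = n + 1" and t: "1 \<le> t" "L * s \<le> (L + 1) * t"
  shows "card {y \<in> C - {x}. card (U \<inter> disagreement n x y) \<le> 1} < L"
proof (rule ccontr)
  assume "\<not> ?thesis"
  then have "L \<le> card {y \<in> C - {x}. card (U \<inter> disagreement n x y) \<le> 1}"
    by simp
  then obtain Y where Y: "Y \<subseteq> {y \<in> C - {x}. card (U \<inter> disagreement n x y) \<le> 1}"
    and cY: "card Y = L" and fY: "finite Y"
    by (rule obtain_subset_with_card_n)
  define S where "S = insert x Y"
  have xY: "x \<notin> Y"
    using Y by blast
  have SC: "S \<subseteq> C"
    using Y x by (auto simp: S_def)
  have cS: "card S = L + 1"
    using fY cY xY by (simp add: S_def)
  define R where "R = {..<n} - U"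
  have "finite U"
    using U(1) finite_subset by blast
  then have cR: "card R = s - 1"
    using U by (simp add: R_def card_Diff_subset)
  have UR: "{..<n} - R = U"
    using U(1) by (auto simp: R_def)
  define a where "a c = (if c = x then s - 1 - t else s - t)" for c
  have "(\<Sum>c\<in>Y. a c) = (\<Sum>c\<in>Y. s - t)"
    using xY by (intro sum.cong) (auto simp: a_def)
  then have "(\<Sum>c\<in>S. a c) = (s - 1 - t) + L * (s - t)"
    using fY xY cY by (simp add: S_def a_def)
  also have "\<dots> \<le> card R"
    using Suc_mult_diff_le(2)[OF t(2)] cR by simp
  finally have "(\<Sum>c\<in>S. a c) \<le> card R" .
  moreover have "card {j \<in> U. c j \<noteq> x j} + (card R - a c) \<le> t" if c: "c \<in> S" for c
  proof (cases "c = x")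
    case True
    then show ?thesis
      using cR by (simp add: a_def)
  next
    case False
    with c Y have "card (U \<inter> disagreement n x c) \<le> 1"
      by (auto simp: S_def)
    moreover have "{j \<in> U. c j \<noteq> x j} = U \<inter> disagreement n x c"
      using U(1) by (auto simp: disagreement_def)
    ultimately show ?thesis
      using cR t(1) False by (simp add: a_def)
  qed
  moreover have "x \<in> words q n" "R \<subseteq> {..<n}"
    using C x by (auto simp: R_def)
  ultimately have "card S \<le> L"
    using card_le_of_coordinate_budget[OF C dec SC, of x R a] unfolding UR by blast
  with cS show False
    by simp
qed

lemma card_mult_choose_le_card_subsets_meeting_once:
  assumes V: "finite V" and D: "D \<subseteq> V"
  shows "card D * ((card V - card D) choose k)
    \<le> card {U. U \<subseteq> V \<and> card U = k + 1 \<and> card (U \<inter> D) \<le> 1}"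
proof -
  define Bs where "Bs = {B. B \<subseteq> V - D \<and> card B = k}"
  have "finite D"
    using D V finite_subset by blast
  then have cBs: "card Bs = (card V - card D) choose k"
    using n_subsets[of "V - D" k] D V by (simp add: Bs_def card_Diff_subset)
  have "inj_on (\<lambda>(j, B). insert j B) (D \<times> Bs)"
  proof (rule inj_on_inverseI[where g = "\<lambda>U. (the_elem (U \<inter> D), U - D)"])
    fix p
    assume "p \<in> D \<times> Bs"
    then obtain j B where "p = (j, B)" "j \<in> D" "B \<subseteq> V - D"
      by (auto simp: Bs_def)
    moreover from this have "B \<inter> D = {}"
      by auto
    ultimately show "(\<lambda>U. (the_elem (U \<inter> D), U - D)) ((\<lambda>(j, B). insert j B) p) = p"
      by (simp add: Diff_triv)
  qed
  moreover have "(\<lambda>(j, B). insert j B) ` (D \<times> Bs) \<subseteq> {U. U \<subseteq> V \<and> card U = k + 1 \<and> card (U \<inter> D) \<le> 1}"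
  proof clarify
    fix j B
    assume "j \<in> D" "B \<in> Bs"
    then have "j \<in> D" "B \<subseteq> V - D" "card B = k"
      by (auto simp: Bs_def)
    moreover from this have "finite B"
      using V by (meson finite_Diff finite_subset)
    moreover from calculation have "insert j B \<inter> D = {j}" "j \<notin> B"
      by auto
    ultimately show "insert j B \<subseteq> V \<and> card (insert j B) = k + 1 \<and> card (insert j B \<inter> D) \<le> 1"
      using D by auto
  qed
  moreover have "finite {U. U \<subseteq> V \<and> card U = k + 1 \<and> card (U \<inter> D) \<le> 1}"
    using V by (auto intro: finite_subset[of _ "Pow V"])
  ultimately have "card ((\<lambda>(j, B). insert j B) ` (D \<times> Bs))
      \<le> card {U. U \<subseteq> V \<and> card U = k + 1 \<and> card (U \<inter> D) \<le> 1}"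
    by (intro card_mono)
  with \<open>inj_on (\<lambda>(j, B). insert j B) (D \<times> Bs)\<close> have "card (D \<times> Bs)
      \<le> card {U. U \<subseteq> V \<and> card U = k + 1 \<and> card (U \<inter> D) \<le> 1}"
    by (simp add: card_image)
  then show ?thesis
    by (simp add: card_cartesian_product cBs)
qed

text \<open>Double counting of the pairs (y, U) with card U = k + 1 and U meeting the disagreement
  set of x and y at most once.\<close>
lemma sum_choose_mult_hamming_dist_le:
  assumes C: "C \<subseteq> words q n" and dec: "list_decodable_radius q n t L C" and x: "x \<in> C"
    and ks: "k + s = n" and t: "1 \<le> t" "L * s \<le> (L + 1) * t"
  shows "(\<Sum>y\<in>C - {x}. ((n - hamming_dist n x y) choose k) * hamming_dist n x y)
    \<le> (L - 1) * (n choose (k + 1))"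
proof -
  have fC: "finite C"
    using C by (rule finite_subset_words)
  define K where "K = {U. U \<subseteq> {..<n} \<and> card U = k + 1}"
  have fK: "finite K"
    unfolding K_def by (rule finite_subset[of _ "Pow {..<n}"]) auto
  have cK: "card K = n choose (k + 1)"
    unfolding K_def using n_subsets[of "{..<n}" "k + 1"] by simp
  define once where "once y U \<longleftrightarrow> card (U \<inter> disagreement n x y) \<le> 1" for y U
  have "(\<Sum>y\<in>C - {x}. ((n - hamming_dist n x y) choose k) * hamming_dist n x y)
      \<le> (\<Sum>y\<in>C - {x}. card {U \<in> K. once y U})"
  proof (rule sum_mono)
    fix y
    have "{U \<in> K. once y U}
        = {U. U \<subseteq> {..<n} \<and> card U = k + 1 \<and> card (U \<inter> disagreement n x y) \<le> 1}"
      by (auto simp: K_def once_def)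
    then show "((n - hamming_dist n x y) choose k) * hamming_dist n x y \<le> card {U \<in> K. once y U}"
      using card_mult_choose_le_card_subsets_meeting_once[of "{..<n}" "disagreement n x y" k]
        disagreement_subset
      by (simp add: hamming_dist_eq_card_disagreement mult.commute)
  qed
  also have "\<dots> = (\<Sum>U\<in>K. card {y \<in> C - {x}. once y U})"
    using fC fK by (intro sum_card_filter_swap) auto
  also have "\<dots> \<le> (\<Sum>U\<in>K. L - 1)"
  proof (rule sum_mono)
    fix U
    assume "U \<in> K"
    then have "U \<subseteq> {..<n}" "card U + s = n + 1"
      using ks by (auto simp: K_def)
    from card_nearly_agreeing_on_less[OF C dec x this t]
    show "card {y \<in> C - {x}. once y U} \<le> L - 1"
      unfolding once_def by simp
  qed
  finally show ?thesis
    by (simp add: cK mult.commute)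
qed

section \<open>Codewords with a close neighbour\<close>

definition close_codewords :: "nat \<Rightarrow> nat \<Rightarrow> (nat \<Rightarrow> nat) set \<Rightarrow> (nat \<Rightarrow> nat) set" where
  "close_codewords n \<delta> C = {x \<in> C. \<exists>y\<in>C. y \<noteq> x \<and> hamming_dist n x y \<le> \<delta>}"

definition separated :: "nat \<Rightarrow> nat \<Rightarrow> (nat \<Rightarrow> nat) set \<Rightarrow> bool" where
  "separated n d Z \<longleftrightarrow> (\<forall>z\<in>Z. \<forall>z'\<in>Z. z \<noteq> z' \<longrightarrow> d < hamming_dist n z z')"

lemma exists_separated_net:
  assumes "finite X"
  obtains Z where "Z \<subseteq> X" and "separated n d Z" and "\<And>x. x \<in> X \<Longrightarrow> \<exists>z\<in>Z. hamming_dist n x z \<le> d"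
proof -
  have "card Z < card X + 1" if "Z \<subseteq> X" for Z
    using card_mono[OF assms that] by simp
  then have "\<forall>Z. Z \<subseteq> X \<and> separated n d Z \<longrightarrow> card Z < card X + 1"
    by blast
  moreover have "{} \<subseteq> X \<and> separated n d {}"
    by (simp add: separated_def)
  ultimately have "\<exists>Z. (Z \<subseteq> X \<and> separated n d Z)
      \<and> (\<forall>Z'. Z' \<subseteq> X \<and> separated n d Z' \<longrightarrow> card Z' \<le> card Z)"
    by (intro Lattices_Big.ex_has_greatest_nat[of "\<lambda>Z. Z \<subseteq> X \<and> separated n d Z" "{}"])
  then obtain Z where Z: "Z \<subseteq> X" "separated n d Z"
    and max: "\<And>Z'. Z' \<subseteq> X \<Longrightarrow> separated n d Z' \<Longrightarrow> card Z' \<le> card Z"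
    by blast
  have fZ: "finite Z"
    using Z(1) assms finite_subset by blast
  have "\<exists>z\<in>Z. hamming_dist n x z \<le> d" if x: "x \<in> X" for x
  proof (rule ccontr)
    assume far: "\<not> ?thesis"
    then have "x \<notin> Z"
      by force
    moreover have "d < hamming_dist n x z \<and> d < hamming_dist n z x" if "z \<in> Z" for z
      using far that hamming_dist_commute[of n x z] by auto
    then have "separated n d (insert x Z)"
      using Z(2) by (auto simp: separated_def)
    then have "card (insert x Z) \<le> card Z"
      using max Z(1) x by blast
    ultimately show False
      using fZ by simp
  qed
  with Z that show ?thesis
    by blast
qed

lemma card_union_partners:
  assumes W: "finite W" "separated n (2 * \<delta>) W"
    and m: "\<And>z. z \<in> W \<Longrightarrow> m z \<noteq> z \<and> hamming_dist n z (m z) \<le> \<delta>"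
  shows "card (W \<union> m ` W) = 2 * card W"
proof -
  have sep: "2 * \<delta> < hamming_dist n z z'" if "z \<in> W" "z' \<in> W" "z \<noteq> z'" for z z'
    using W(2) that by (auto simp: separated_def)
  have "m z \<notin> W" if "z \<in> W" for z
  proof
    assume "m z \<in> W"
    with sep[OF that] m[OF that] show False
      by (metis less_le_trans mult_le_mono1 le_add2 mult_2 not_le)
  qed
  then have "W \<inter> m ` W = {}"
    by blast
  moreover have "inj_on m W"
  proof (rule inj_onI, rule ccontr)
    fix z z'
    assume zz': "z \<in> W" "z' \<in> W" "m z = m z'" "z \<noteq> z'"
    have "hamming_dist n z z' \<le> hamming_dist n z (m z) + hamming_dist n (m z') z'"
      using hamming_dist_triangle[of n z z' "m z"] zz'(3) by simp
    also have "\<dots> \<le> 2 * \<delta>"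
      using m[OF zz'(1)] m[OF zz'(2)] hamming_dist_commute[of n "m z'" z'] by linarith
    finally show False
      using sep[OF zz'(1,2,4)] by simp
  qed
  ultimately show ?thesis
    using W(1) by (simp add: card_Un_disjoint card_image)
qed

text \<open>Every z in Z has a partner in C within distance \<delta>. By separation, the partners of
  distinct points of Z are distinct and lie outside Z, so w points of Z in a ball of radius
  t - \<delta> give 2 w codewords in the concentric ball of radius t.\<close>
lemma separated_close_codewords_list_decodable:
  assumes dec: "list_decodable_radius q n t L C" and fC: "finite C"
    and Z: "Z \<subseteq> close_codewords n \<delta> C" "separated n (2 * \<delta>) Z" and "\<delta> \<le> t"
  shows "list_decodable_radius q n (t - \<delta>) (L div 2) Z"
  unfolding list_decodable_radius_def
proof
  fix v
  assume v: "v \<in> words q n"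
  define W where "W = {z \<in> Z. hamming_dist n z v \<le> t - \<delta>}"
  have WC: "W \<subseteq> C"
    using Z(1) by (auto simp: W_def close_codewords_def)
  have "\<forall>z\<in>W. \<exists>y. y \<in> C \<and> y \<noteq> z \<and> hamming_dist n z y \<le> \<delta>"
    using Z(1) by (auto simp: W_def close_codewords_def)
  then obtain m where m: "\<forall>z\<in>W. m z \<in> C \<and> m z \<noteq> z \<and> hamming_dist n z (m z) \<le> \<delta>"
    by (rule bchoice[elim_format]) blast
  have "finite W"
    using WC fC by (rule finite_subset)
  moreover have "separated n (2 * \<delta>) W"
    using Z(2) by (auto simp: separated_def W_def)
  ultimately have "2 * card W = card (W \<union> m ` W)"
    using card_union_partners[of W n \<delta> m] m by simp
  also have "\<dots> \<le> card {c \<in> C. hamming_dist n c v \<le> t}"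
  proof (rule card_mono)
    have "hamming_dist n (m z) v \<le> t" if "z \<in> W" for z
    proof -
      have "hamming_dist n (m z) v \<le> hamming_dist n (m z) z + hamming_dist n z v"
        by (rule hamming_dist_triangle)
      also have "\<dots> \<le> \<delta> + (t - \<delta>)"
        using bspec[OF m that] that hamming_dist_commute[of n "m z" z] by (simp add: W_def)
      finally show ?thesis
        using \<open>\<delta> \<le> t\<close> by simp
    qed
    moreover have "hamming_dist n z v \<le> t" if "z \<in> W" for z
      using that by (auto simp: W_def)
    ultimately show "W \<union> m ` W \<subseteq> {c \<in> C. hamming_dist n c v \<le> t}"
      using WC m by blast
  qed (use fC in simp)
  also have "\<dots> \<le> L"
    using dec v unfolding list_decodable_radius_def by blast
  finally show "card {z \<in> Z. hamming_dist n z v \<le> t - \<delta>} \<le> L div 2"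
    unfolding W_def by linarith
qed

text \<open>A maximal 2 \<delta>-separated subset Z of the close codewords is a 2 \<delta>-net of them; each ball
  of radius t around a point of Z holds at most L codewords, and Z itself obeys the
  Singleton-type bound for radius t - \<delta> and list size L div 2.\<close>
lemma card_close_codewords_le:
  assumes C: "C \<subseteq> words q n" and dec: "list_decodable_radius q n t L C" and \<delta>: "2 * \<delta> \<le> t"
    and s: "s \<le> n" "(L div 2) * s \<le> (L div 2 + 1) * (t - \<delta>)"
  shows "card (close_codewords n \<delta> C) \<le> L * ((L div 2) * q ^ (n - s))"
proof -
  define X where "X = close_codewords n \<delta> C"
  have fC: "finite C"
    using C by (rule finite_subset_words)
  have XC: "X \<subseteq> C"
    by (auto simp: X_def close_codewords_def)
  then have "finite X"
    using fC finite_subset by blast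
  then obtain Z where ZX: "Z \<subseteq> X" and sep: "separated n (2 * \<delta>) Z"
    and net: "\<And>x. x \<in> X \<Longrightarrow> \<exists>z\<in>Z. hamming_dist n x z \<le> 2 * \<delta>"
    using exists_separated_net[where n = n and d = "2 * \<delta>"] by blast
  have fZ: "finite Z"
    using ZX \<open>finite X\<close> finite_subset by blast
  have "X \<subseteq> (\<Union>z\<in>Z. {c \<in> C. hamming_dist n c z \<le> t})"
  proof
    fix x
    assume "x \<in> X"
    with net obtain z where "z \<in> Z" "hamming_dist n x z \<le> 2 * \<delta>"
      by blast
    with \<open>x \<in> X\<close> XC \<delta> show "x \<in> (\<Union>z\<in>Z. {c \<in> C. hamming_dist n c z \<le> t})"
      by (auto intro!: bexI[of _ z])
  qed
  then have "card X \<le> card (\<Union>z\<in>Z. {c \<in> C. hamming_dist n c z \<le> t})"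
    using fZ fC by (intro card_mono) auto
  also have "\<dots> \<le> (\<Sum>z\<in>Z. card {c \<in> C. hamming_dist n c z \<le> t})"
    using fZ by (rule card_UN_le)
  also have "\<dots> \<le> (\<Sum>z\<in>Z. L)"
    using dec ZX XC C unfolding list_decodable_radius_def by (intro sum_mono) blast
  finally have "card X \<le> L * card Z"
    by (simp add: mult.commute)
  moreover have "list_decodable_radius q n (t - \<delta>) (L div 2) Z"
    using separated_close_codewords_list_decodable[OF dec fC _ sep] ZX \<delta> by (simp add: X_def)
  then have "card Z \<le> (L div 2) * q ^ (n - s)"
    using list_decodable_singleton_bound[OF _ _ s] ZX XC C by blast
  ultimately show ?thesis
    unfolding X_def by (meson le_trans mult_le_mono2)
qed

section \<open>Splitting off the close pairs\<close>

lemma card_near_codeword_less: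
  assumes C: "C \<subseteq> words q n" and dec: "list_decodable_radius q n t L C" and x: "x \<in> C"
    and "\<delta> \<le> t"
  shows "card {y \<in> C - {x}. hamming_dist n x y \<le> \<delta>} < L"
proof -
  define Y where "Y = {y \<in> C - {x}. hamming_dist n x y \<le> \<delta>}"
  have fC: "finite C"
    using C by (rule finite_subset_words)
  have "hamming_dist n c x \<le> t" if "c \<in> insert x Y" for c
    using that \<open>\<delta> \<le> t\<close> hamming_dist_commute[of n x c] by (auto simp: Y_def)
  then have "card (insert x Y) \<le> L"
    using x C by (intro list_decodable_radius_card_le[OF dec fC]) (auto simp: Y_def)
  moreover have "finite Y"
    using fC by (simp add: Y_def)
  ultimately show ?thesis
    by (simp add: Y_def)
qed

text \<open>Codewords y within distance \<delta> of x number fewer than L and exist only if x is a close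
  codeword; for the others the summand is at most hamming_dist n x y / (\<delta> + 1) times itself.\<close>
lemma sum_choose_hamming_le:
  assumes C: "C \<subseteq> words q n" and dec: "list_decodable_radius q n t L C" and x: "x \<in> C"
    and ks: "k + s = n" and t: "1 \<le> t" "L * s \<le> (L + 1) * t" and "\<delta> \<le> t"
  shows "(\<delta> + 1) * (\<Sum>y\<in>C - {x}. (n - hamming_dist n x y) choose k)
    \<le> (\<delta> + 1) * ((L - 1) * of_bool (x \<in> close_codewords n \<delta> C) * (n choose k))
      + (L - 1) * (n choose (k + 1))"
proof -
  have fC: "finite C"
    using C by (rule finite_subset_words)
  define b where "b y = (n - hamming_dist n x y) choose k" for y
  define near where "near = {y \<in> C - {x}. hamming_dist n x y \<le> \<delta>}"
  define far where "far = {y \<in> C - {x}. \<not> hamming_dist n x y \<le> \<delta>}"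
  have "C - {x} = near \<union> far" "near \<inter> far = {}"
    by (auto simp: near_def far_def)
  moreover have "finite near" "finite far"
    using fC by (simp_all add: near_def far_def)
  ultimately have split: "(\<Sum>y\<in>C - {x}. b y) = (\<Sum>y\<in>near. b y) + (\<Sum>y\<in>far. b y)"
    by (simp add: sum.union_disjoint)
  have "card near \<le> (L - 1) * of_bool (x \<in> close_codewords n \<delta> C)"
  proof (cases "x \<in> close_codewords n \<delta> C")
    case True
    then show ?thesis
      using card_near_codeword_less[OF C dec x \<open>\<delta> \<le> t\<close>] by (simp add: near_def)
  next
    case False
    then have "near = {}"
      using x by (auto simp: near_def close_codewords_def)
    then show ?thesis
      by simp
  qed
  moreover have "(\<Sum>y\<in>near. b y) \<le> card near * (n choose k)"
    using sum_bounded_above[of near b "n choose k"] binomial_right_mono[OF diff_le_self, of n _ k]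
    by (simp add: b_def)
  ultimately have near: "(\<Sum>y\<in>near. b y) \<le> (L - 1) * of_bool (x \<in> close_codewords n \<delta> C) * (n choose k)"
    using mult_le_mono1 order_trans by blast
  have "(\<delta> + 1) * (\<Sum>y\<in>far. b y) \<le> (L - 1) * (n choose (k + 1))"
  proof -
    have "(\<delta> + 1) * (\<Sum>y\<in>far. b y) = (\<Sum>y\<in>far. b y * (\<delta> + 1))"
      by (simp add: sum_distrib_left mult.commute)
    also have "\<dots> \<le> (\<Sum>y\<in>far. b y * hamming_dist n x y)"
      by (intro sum_mono mult_le_mono2) (auto simp: far_def)
    also have "\<dots> \<le> (\<Sum>y\<in>C - {x}. b y * hamming_dist n x y)"
      using fC by (intro sum_mono2) (auto simp: far_def)
    also have "\<dots> \<le> (L - 1) * (n choose (k + 1))"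
      unfolding b_def by (rule sum_choose_mult_hamming_dist_le[OF C dec x ks t])
    finally show ?thesis .
  qed
  with near show ?thesis
    unfolding split b_def[symmetric] distrib_left by (intro add_mono mult_le_mono2)
qed

lemma sum_sum_choose_hamming_le:
  assumes C: "C \<subseteq> words q n" and dec: "list_decodable_radius q n t L C"
    and ks: "k + s = n" and t: "1 \<le> t" "L * s \<le> (L + 1) * t" and "\<delta> \<le> t"
  shows "(\<delta> + 1) * (\<Sum>x\<in>C. \<Sum>y\<in>C - {x}. (n - hamming_dist n x y) choose k)
    \<le> (\<delta> + 1) * ((L - 1) * card (close_codewords n \<delta> C) * (n choose k))
      + card C * ((L - 1) * (n choose (k + 1)))"
proof -
  define X where "X = close_codewords n \<delta> C"
  have "finite C"
    using C by (rule finite_subset_words)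
  moreover have "X \<subseteq> C"
    by (auto simp: X_def close_codewords_def)
  ultimately have card_X: "(\<Sum>x\<in>C. of_bool (x \<in> X) :: nat) = card X"
    by (simp add: Int_absorb1)
  have "(\<delta> + 1) * (\<Sum>x\<in>C. \<Sum>y\<in>C - {x}. (n - hamming_dist n x y) choose k)
      = (\<Sum>x\<in>C. (\<delta> + 1) * (\<Sum>y\<in>C - {x}. (n - hamming_dist n x y) choose k))"
    by (simp add: sum_distrib_left)
  also have "\<dots> \<le> (\<Sum>x\<in>C. (\<delta> + 1) * ((L - 1) * of_bool (x \<in> X) * (n choose k))
      + (L - 1) * (n choose (k + 1)))"
    unfolding X_def by (intro sum_mono sum_choose_hamming_le[OF C dec _ ks t \<open>\<delta> \<le> t\<close>])
  also have "\<dots> = (\<delta> + 1) * ((L - 1) * (\<Sum>x\<in>C. of_bool (x \<in> X)) * (n choose k))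
      + card C * ((L - 1) * (n choose (k + 1)))"
    by (simp only: sum.distrib sum_distrib_left sum_distrib_right sum_constant of_nat_id)
  finally have "(\<delta> + 1) * (\<Sum>x\<in>C. \<Sum>y\<in>C - {x}. (n - hamming_dist n x y) choose k)
    \<le> (\<delta> + 1) * ((L - 1) * card X * (n choose k)) + card C * ((L - 1) * (n choose (k + 1)))"
    unfolding card_X .
  then show ?thesis
    unfolding X_def .
qed

lemma Suc_mult_choose_Suc: "(k + 1) * (n choose (k + 1)) = (n - k) * (n choose k)"
  using binomial_absorption[of k n] binomial_absorb_comp[of n k] by simp

theorem card_le_close_codewords_plus_error:
  assumes C: "C \<subseteq> words q n" and dec: "list_decodable_radius q n t L C"
    and ks: "k + s = n" and t: "1 \<le> t" "L * s \<le> (L + 1) * t" and "\<delta> \<le> t"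
  shows "real (card C) \<le> real q ^ k + real (L - 1) * real (card (close_codewords n \<delta> C))
    + real (L - 1) * real (n - k) / (real (k + 1) * real (\<delta> + 1)) * real (card C)"
proof -
  define B where "B = n choose k"
  define B1 where "B1 = n choose (k + 1)"
  define X where "X = close_codewords n \<delta> C"
  define P where "P = (\<Sum>x\<in>C. \<Sum>y\<in>C - {x}. (n - hamming_dist n x y) choose k)"
  have B: "real B > 0"
    using ks by (simp add: B_def)
  have sum_le: "real (\<delta> + 1) * real P
      \<le> real (\<delta> + 1) * (real (L - 1) * real (card X) * real B) + real (card C) * (real (L - 1) * real B1)"
    using of_nat_mono[where 'a = real, OF sum_sum_choose_hamming_le[OF C dec ks t \<open>\<delta> \<le> t\<close>]]
    unfolding B_def B1_def P_def X_def by (simp only: of_nat_mult of_nat_add)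
  have avg: "real B * real (card C) \<le> real B * real q ^ k + real P"
    using of_nat_mono[where 'a = real, OF choose_mult_card_le[OF C, of k]]
    unfolding B_def P_def by (simp only: of_nat_mult of_nat_add of_nat_power)
  have shift: "real (k + 1) * real B1 = real (n - k) * real B"
    using arg_cong[OF Suc_mult_choose_Suc[of k n], of real] unfolding B_def B1_def
    by (simp only: of_nat_mult)
  have "c \<le> Q + l * x + l * m / (e * d) * c"
    if "b > 0" "d > 0" "e > 0" and "b * c \<le> b * Q + p" and "d * p \<le> d * (l * x * b) + c * (l * b1)"
      and "e * b1 = m * b"
    for b c d e l m p x b1 Q :: real
  proof -
    have "c \<le> Q + p / b"
      using that by (simp add: field_simps)
    moreover have "e * (d * p) \<le> e * (d * (l * x * b)) + c * l * (e * b1)"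
      using mult_left_mono[OF that(5), of e] that(3) by (simp add: algebra_simps)
    then have "e * (d * p) \<le> e * (d * (l * x * b)) + c * l * (m * b)"
      unfolding that(6) .
    then have "p / b \<le> l * x + l * m / (e * d) * c"
      using that(1-3) by (simp add: field_simps)
    ultimately show ?thesis
      by linarith
  qed
  from this[OF B _ _ avg sum_le shift] show ?thesis
    unfolding X_def by (simp add: mult.commute)
qed

section \<open>Asymptotics\<close>

lemma power_le_mult_powr_shift:
  fixes \<gamma> :: real
  assumes q: "2 \<le> q" and s: "s \<le> s'" "s' \<le> n" and shift: "\<gamma> * real n - 1 \<le> real (s' - s)"
  shows "real q ^ (n - s') \<le> 2 * (2 powr - \<gamma>) ^ n * real q ^ (n - s)"
proof -
  have "1 \<le> (2::real) powr (real (s' - s) + 1 - \<gamma> * real n)"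
    using shift by (intro ge_one_powr_ge_zero) auto
  also have "\<dots> = 2 ^ (s' - s) * (2 * (2 powr - \<gamma>) ^ n)"
    by (simp add: powr_add powr_diff powr_power powr_realpow powr_minus field_simps)
  also have "\<dots> \<le> real q ^ (s' - s) * (2 * (2 powr - \<gamma>) ^ n)"
    using q by (intro mult_right_mono power_mono) auto
  finally have "real q ^ (n - s') \<le> real q ^ (n - s') * (real q ^ (s' - s) * (2 * (2 powr - \<gamma>) ^ n))"
    using q by simp
  also have "\<dots> = 2 * (2 powr - \<gamma>) ^ n * real q ^ (n - s)"
    using s by (simp add: power_add[symmetric] mult_ac)
  finally show ?thesis .
qed

lemma real_div_nat_bounds:
  assumes "0 < m"
  shows "real a / real m - 1 < real (a div m)" and "real (a div m) \<le> real a / real m"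
proof -
  have "real (a div m) = real_of_int \<lfloor>real a / real m\<rfloor>"
    by (metis floor_divide_of_nat_eq of_int_of_nat_eq)
  then show "real a / real m - 1 < real (a div m)" "real (a div m) \<le> real a / real m"
    by simp_all
qed

locale decoding_rate =
  fixes L :: nat and r :: real
  assumes L_pos: "1 \<le> L" and r_pos: "0 < r" and r_less: "r < real L / (real L + 1)"
begin

text \<open>For t = r n, the length n - singleton_length t is about \<beta> n and the closeness threshold
  \<delta> t about \<kappa> n; E / n bounds the error term of the averaging bound, and
  2 K (2 powr - \<gamma>)^n bounds the close codewords relative to q^(n - singleton_length t).\<close>

definition \<beta> :: real where "\<beta> = 1 - (real L + 1) * r / real L"
definition \<kappa> :: real where "\<kappa> = r / (4 * real L)"
definition \<gamma> :: real where "\<gamma> = min \<beta> \<kappa>"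
definition E :: real where "E = real (L - 1) / (\<beta> * \<kappa>)"
definition K :: real where "K = real ((L - 1) * L * (L div 2))"
definition N :: nat where "N = nat \<lceil>1 / r + E + 1 / \<gamma>\<rceil> + 1"
definition singleton_length :: "nat \<Rightarrow> nat" where
  "singleton_length t = (L + 1) * t div L"
definition \<delta> :: "nat \<Rightarrow> nat" where "\<delta> t = t div (4 * L)"
text \<open>For L = 1 there are no close codewords, so net_length n t = n is merely a harmless value
  avoiding the division by L div 2 = 0.\<close>
definition net_length :: "nat \<Rightarrow> nat \<Rightarrow> nat" where
  "net_length n t = (if L div 2 = 0 then n else min n ((L div 2 + 1) * (t - \<delta> t) div (L div 2)))"

text \<open>The maximum with 0 only matters for n < N, where 1 - E / n may be nonpositive.\<close>
definition g :: "nat \<Rightarrow> real" where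
  "g n = max 0 ((1 + 2 * K * (2 powr - \<gamma>) ^ n) / (1 - E / real n) - 1)"

lemma \<beta>_pos: "0 < \<beta>"
  using L_pos r_less by (simp add: \<beta>_def field_simps)

lemma \<kappa>_pos: "0 < \<kappa>"
  using L_pos r_pos by (simp add: \<kappa>_def)

lemma \<gamma>_pos: "0 < \<gamma>"
  using \<beta>_pos \<kappa>_pos by (simp add: \<gamma>_def)

lemma E_nonneg: "0 \<le> E"
  using \<beta>_pos \<kappa>_pos by (simp add: E_def)

lemma large_n:
  assumes "N \<le> n"
  shows "1 \<le> r * real n" and "E < real n" and "1 \<le> \<gamma> * real n"
proof -
  have "1 / r + E + 1 / \<gamma> < real n"
    using assms unfolding N_def by linarith
  moreover have "0 < 1 / r" "0 < 1 / \<gamma>"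
    using r_pos \<gamma>_pos by simp_all
  ultimately have "1 / r \<le> real n" "E < real n" "1 / \<gamma> \<le> real n"
    using E_nonneg by linarith+
  then show "1 \<le> r * real n" "E < real n" "1 \<le> \<gamma> * real n"
    using r_pos \<gamma>_pos by (simp_all add: field_simps)
qed

lemma g_nonneg: "0 \<le> g n"
  by (simp add: g_def)

lemma g_tendsto_zero: "g \<longlonglongrightarrow> 0"
proof -
  have "(\<lambda>n. (1 + 2 * K * (2 powr - \<gamma>) ^ n) / (1 - E / real n) - 1) \<longlonglongrightarrow> (1 + 2 * K * 0) / (1 - 0) - 1"
    using \<gamma>_pos
    by (intro tendsto_intros LIMSEQ_power_zero tendsto_divide_0[OF tendsto_const]
        filterlim_at_top_imp_at_infinity filterlim_real_sequentially) (auto intro: powr_less_one)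
  then have "g \<longlonglongrightarrow> max 0 0"
    unfolding g_def by (intro tendsto_max tendsto_const) simp
  then show ?thesis
    by simp
qed


lemma singleton_length_le:
  assumes "r * real n = real t"
  shows "real (singleton_length t) \<le> (1 - \<beta>) * real n"
proof -
  have "real (singleton_length t) \<le> real ((L + 1) * t) / real L"
    unfolding singleton_length_def using L_pos by (intro real_div_nat_bounds) simp
  also have "\<dots> = (1 - \<beta>) * real n"
    using assms L_pos by (simp add: \<beta>_def field_simps)
  finally show ?thesis .
qed

lemma singleton_length_le_length:
  assumes "r * real n = real t"
  shows "singleton_length t \<le> n"
proof -
  have "real (singleton_length t) \<le> real n - \<beta> * real n"
    using singleton_length_le[OF assms] by (simp add: algebra_simps)
  moreover have "0 \<le> \<beta> * real n"
    using \<beta>_pos by simp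
  ultimately show ?thesis
    by simp
qed

lemma floor_singleton_length:
  assumes "r * real n = real t"
  shows "\<lfloor>(real L + 1) / real L * r * real n\<rfloor> = int (singleton_length t)"
proof -
  have "(real L + 1) / real L * r * real n = real ((L + 1) * t) / real L"
    using assms by (simp add: mult.assoc algebra_simps)
  then show ?thesis
    unfolding singleton_length_def by (simp only: floor_divide_of_nat_eq of_nat_id)
qed

lemma \<delta>_le: "4 * real L * real (\<delta> t) \<le> real t"
proof -
  have "real (\<delta> t) \<le> real t / real (4 * L)"
    unfolding \<delta>_def using L_pos by (intro real_div_nat_bounds) simp
  then show ?thesis
    using L_pos by (simp add: field_simps)
qed

lemma two_\<delta>_le: "2 * \<delta> t \<le> t"
proof -
  have "2 * \<delta> t \<le> \<delta> t * (4 * L)"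
    using L_pos by (cases L) auto
  also have "\<dots> \<le> t"
    unfolding \<delta>_def by (rule div_times_less_eq_dividend)
  finally show ?thesis .
qed

text \<open>Passing to list size L div 2 and radius t - \<delta> t gains about t / L - 3 \<delta> t in the
  Singleton length, which \<delta> t is chosen to keep at t / (4 L).\<close>
lemma net_length_shift:
  assumes t: "r * real n = real t"
  shows "\<gamma> * real n - 1 \<le> real (net_length n t) - real (singleton_length t)"
proof -
  have s: "real (singleton_length t) \<le> (1 - \<beta>) * real n"
    using t by (rule singleton_length_le)
  have "\<gamma> * real n \<le> \<beta> * real n" "\<gamma> * real n \<le> \<kappa> * real n"
    by (simp_all add: \<gamma>_def mult_right_mono)
  show ?thesis
  proof (cases "net_length n t = n")
    case True
    then show ?thesis
      using s \<open>\<gamma> * real n \<le> \<beta> * real n\<close> by (simp add: algebra_simps)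
  next
    case False
    define M where "M = L div 2"
    then have M: "0 < M" "2 * real M \<le> real L"
      using False by (auto simp: net_length_def split: if_splits)
    have s': "net_length n t = (M + 1) * (t - \<delta> t) div M"
      using False by (auto simp: net_length_def M_def)
    have td: "real (t - \<delta> t) = real t - real (\<delta> t)"
      using two_\<delta>_le[of t] by (simp add: of_nat_diff)
    define x where "x = real t / real L"
    define z where "z = (real t - real (\<delta> t)) / real M"
    have "real t - real (\<delta> t) + z - 1 < real (net_length n t)"
      using real_div_nat_bounds(1)[OF M(1), of "(M + 1) * (t - \<delta> t)"] M(1)
      by (simp add: s' z_def td field_simps)
    moreover have "2 * x - 2 * (real (\<delta> t) / real L) \<le> z"
    proof -
      have "2 * real M * (real t - real (\<delta> t)) \<le> real L * (real t - real (\<delta> t))"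
        using M(2) two_\<delta>_le[of t] by (intro mult_right_mono) auto
      then show ?thesis
        using M(1) L_pos by (simp add: x_def z_def field_simps)
    qed
    moreover have "(1 - \<beta>) * real n = real t + x"
      using L_pos unfolding x_def t[symmetric] by (simp add: \<beta>_def field_simps)
    moreover have "\<kappa> * real n = x / 4"
      using t by (simp add: x_def \<kappa>_def)
    moreover have "real (\<delta> t) / real L \<le> real (\<delta> t)"
      using L_pos by (simp add: divide_le_eq mult_le_cancel_left1)
    moreover have "4 * real (\<delta> t) \<le> x"
      using \<delta>_le[of t] L_pos by (simp add: x_def field_simps)
    ultimately show ?thesis
      using s \<open>\<gamma> * real n \<le> \<kappa> * real n\<close> by linarith
  qed
qed


lemma singleton_length_mult_le: "L * singleton_length t \<le> (L + 1) * t"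
  unfolding singleton_length_def by (rule times_div_less_eq_dividend)

lemma net_length_le:
  "net_length n t \<le> n" "L div 2 * net_length n t \<le> (L div 2 + 1) * (t - \<delta> t)"
proof -
  show "net_length n t \<le> n"
    by (simp add: net_length_def)
  show "L div 2 * net_length n t \<le> (L div 2 + 1) * (t - \<delta> t)"
  proof (cases "L div 2 = 0")
    case True
    then show ?thesis
      by simp
  next
    case False
    then have "net_length n t \<le> (L div 2 + 1) * (t - \<delta> t) div (L div 2)"
      by (simp add: net_length_def)
    then have "L div 2 * net_length n t \<le> L div 2 * ((L div 2 + 1) * (t - \<delta> t) div (L div 2))"
      by (rule mult_le_mono2)
    also have "\<dots> \<le> (L div 2 + 1) * (t - \<delta> t)"
      by (rule times_div_less_eq_dividend)
    finally show ?thesis .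
  qed
qed

lemma error_term_le:
  assumes n: "N \<le> n" and t: "r * real n = real t" and k: "k + singleton_length t = n"
  shows "real (L - 1) * real (n - k) / (real (k + 1) * real (\<delta> t + 1)) \<le> E / real n"
proof -
  have "0 < n"
    using large_n(2)[OF n] E_nonneg by simp
  have "real (singleton_length t) \<le> (1 - \<beta>) * real n"
    using t by (rule singleton_length_le)
  with k have "\<beta> * real n \<le> real (k + 1)"
    by (simp add: algebra_simps)
  moreover have "\<kappa> * real n \<le> real (\<delta> t + 1)"
    using real_div_nat_bounds(1)[of "4 * L" t] L_pos t by (simp add: \<delta>_def \<kappa>_def field_simps)
  ultimately have "\<beta> * real n * (\<kappa> * real n) \<le> real (k + 1) * real (\<delta> t + 1)"
    using \<beta>_pos \<kappa>_pos by (intro mult_mono) auto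
  moreover have "real (L - 1) * real (n - k) \<le> real (L - 1) * real n"
    by (intro mult_left_mono) auto
  ultimately have "real (L - 1) * real (n - k) / (real (k + 1) * real (\<delta> t + 1))
      \<le> real (L - 1) * real n / (\<beta> * real n * (\<kappa> * real n))"
    using \<open>0 < n\<close> \<beta>_pos \<kappa>_pos by (intro frac_le) auto
  also have "\<dots> = E / real n"
    using \<open>0 < n\<close> by (simp add: E_def field_simps)
  finally show ?thesis .
qed

lemma close_codewords_le:
  assumes n: "N \<le> n" and q: "2 \<le> q" and t: "r * real n = real t"
    and C: "C \<subseteq> words q n" and dec: "list_decodable_radius q n t L C"
  shows "real (L - 1) * real (card (close_codewords n (\<delta> t) C))
    \<le> 2 * K * (2 powr - \<gamma>) ^ n * real q ^ (n - singleton_length t)"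
proof -
  define s where "s = singleton_length t"
  define s' where "s' = net_length n t"
  have s': "s' \<le> n" "L div 2 * s' \<le> (L div 2 + 1) * (t - \<delta> t)"
    unfolding s'_def by (rule net_length_le)+
  have shift: "\<gamma> * real n - 1 \<le> real s' - real s"
    unfolding s_def s'_def using t by (rule net_length_shift)
  then have "s \<le> s'"
    using large_n(3)[OF n] by simp
  have "real (L - 1) * real (card (close_codewords n (\<delta> t) C)) \<le> K * real q ^ (n - s')"
    using card_close_codewords_le[OF C dec two_\<delta>_le s'] unfolding K_def
    by (metis (mono_tags, lifting) mult.assoc mult_le_mono2 of_nat_le_iff of_nat_mult of_nat_power)
  also have "\<dots> \<le> K * (2 * (2 powr - \<gamma>) ^ n * real q ^ (n - s))"
    using power_le_mult_powr_shift[OF q \<open>s \<le> s'\<close> s'(1)] shift \<open>s \<le> s'\<close>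
    by (intro mult_left_mono) (auto simp: K_def of_nat_diff)
  finally show ?thesis
    by (simp add: s_def mult_ac)
qed

theorem list_decodable_card_le:
  assumes n: "N \<le> n" and q: "2 \<le> q" and t: "r * real n = real t"
    and C: "C \<subseteq> words q n" and dec: "list_decodable_radius q n t L C"
  shows "real (card C) \<le> (1 + g n) * real q ^ (n - singleton_length t)"
proof -
  define k where "k = n - singleton_length t"
  define \<rho> where "\<rho> = (2::real) powr - \<gamma>"
  have "1 \<le> t" and En: "E < real n"
    using large_n[OF n] t by simp_all
  have k: "k + singleton_length t = n"
    using singleton_length_le_length[OF t] by (simp add: k_def)
  have "real (card C) \<le> real q ^ k + real (L - 1) * real (card (close_codewords n (\<delta> t) C))
      + real (L - 1) * real (n - k) / (real (k + 1) * real (\<delta> t + 1)) * real (card C)"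
    using card_le_close_codewords_plus_error[OF C dec k \<open>1 \<le> t\<close> singleton_length_mult_le]
      two_\<delta>_le[of t] by simp
  also have "real (L - 1) * real (card (close_codewords n (\<delta> t) C)) \<le> 2 * K * \<rho> ^ n * real q ^ k"
    unfolding \<rho>_def k_def by (rule close_codewords_le[OF n q t C dec])
  also have "real (L - 1) * real (n - k) / (real (k + 1) * real (\<delta> t + 1)) * real (card C)
      \<le> E / real n * real (card C)"
    using error_term_le[OF n t k] by (rule mult_right_mono) simp
  finally have "real (card C) * (1 - E / real n) \<le> real q ^ k * (1 + 2 * K * \<rho> ^ n)"
    by (simp add: algebra_simps)
  then have "real (card C) \<le> (1 + 2 * K * \<rho> ^ n) / (1 - E / real n) * real q ^ k"
    using En E_nonneg by (simp add: field_simps)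
  also have "\<dots> \<le> (1 + g n) * real q ^ k"
    unfolding g_def \<rho>_def by (intro mult_right_mono) auto
  finally show ?thesis
    by (simp add: k_def)
qed

end

theorem corollary3p2:
  fixes L :: nat and r :: real
  assumes "L \<ge> 1" and "0 \<le> r" and "r < real L / (real L + 1)"
  shows "\<exists>(N::nat) (g::nat \<Rightarrow> real). (\<forall>n. g n \<ge> 0) \<and> g \<longlonglongrightarrow> 0 \<and>
     (\<forall>q n C. q \<ge> max 2 L \<longrightarrow> n \<ge> N \<longrightarrow> (\<exists>k::nat. r * real n = real k) \<longrightarrow>
        C \<subseteq> words q n \<longrightarrow> list_decodable q n r L C \<longrightarrow>
        real (card C) \<le> (1 + g n) * real q powi (int n - \<lfloor>(real L + 1) / real L * r * real n\<rfloor>))"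
proof (cases "r = 0")
  case True
  have "card C \<le> q ^ n" if "C \<subseteq> words q n" for q n C
    using card_mono[OF finite_words that] by (simp add: card_words)
  then show ?thesis
    using True by (intro exI[of _ 0] exI[of _ "\<lambda>_. 0"]) (auto simp flip: of_nat_power)
next
  case False
  then interpret decoding_rate L r
    using assms by unfold_locales auto
  have "real (card C) \<le> (1 + g n) * real q powi (int n - \<lfloor>(real L + 1) / real L * r * real n\<rfloor>)"
    if "max 2 L \<le> q" "N \<le> n" "r * real n = real t" "C \<subseteq> words q n" "list_decodable q n r L C"
    for q n t C
    using list_decodable_card_le[OF that(2) _ that(3,4)] that list_decodable_iff_radius
      floor_singleton_length[OF that(3)] singleton_length_le_length[OF that(3)]
    by (simp add: of_nat_diff[symmetric] del: of_nat_diff)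
  then show ?thesis
    using g_nonneg g_tendsto_zero by blast
qed

end
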